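(* Let $(X,\mathcal{B},\mu)$ be a standard probability space and $K$ a subset of $\mathfrak{P}$. Then $$h^*_\mu(K)=\sup_{\mathcal{A}\in\mathcal{S}_K}h_\mu(\mathcal{A}),$$ where $\mathcal{S}_K$ is the collection of all sequences $(\alpha_i)_{i=1}^\infty$ of elements of $K$; moreover there is some $\mathcal{A}\in\mathcal{S}_K$ with $h^*_\mu(K)=h_\mu(\mathcal{A})$.
   Context: $\mathfrak{P}$ is the set of finite measurable partitions of $X$ (identified mod $0$); $\alpha\vee\beta=\{A\cap B\colon A\in\alpha,B\in\beta\}$; $H_\mu(\alpha)=-\sum_{A\in\alpha}\mu(A)\log\mu(A)$. For a sequence $\mathcal{A}=(\alpha_i)$ in $\mathfrak{P}$, $h_\mu(\mathcal{A})=\limsup_{n\to\infty}\frac1nH_\mu(\bigvee_{i=1}^n\alpha_i)$. For $K\subset\mathfrak{P}$, $P^*_{K,\mu}(n)=\sup_{\alpha_1,\dots,\alpha_n\in K}H_\mu(\bigvee_{i=1}^n\alpha_i)$ and $h^*_\mu(K)=\limsup_{n\to\infty}\frac1nP^*_{K,\mu}(n)$. *)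

theory Defs
  imports "HOL-Probability.Probability"
begin

text \<open>Finite measurable partitions of the space of M (a partition is a finite set of
measurable, pairwise disjoint sets covering the space; identification mod 0 is
irrelevant since all quantities below are invariant under it).\<close>
definition fin_partition :: "'a measure \<Rightarrow> 'a set set \<Rightarrow> bool" where
  "fin_partition M \<alpha> \<longleftrightarrow> finite \<alpha> \<and> \<alpha> \<subseteq> sets M \<and> disjoint \<alpha> \<and> \<Union>\<alpha> = space M"

definition part_join :: "'a set set \<Rightarrow> 'a set set \<Rightarrow> 'a set set" where
  "part_join \<alpha> \<beta> = {A \<inter> B | A B. A \<in> \<alpha> \<and> B \<in> \<beta>}"

definition part_entropy :: "'a measure \<Rightarrow> 'a set set \<Rightarrow> real" where
  "part_entropy M \<alpha> = - (\<Sum>A\<in>\<alpha>. measure M A * ln (measure M A))"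

primrec join_upto :: "'a measure \<Rightarrow> (nat \<Rightarrow> 'a set set) \<Rightarrow> nat \<Rightarrow> 'a set set" where
  "join_upto M a 0 = {space M}"
| "join_upto M a (Suc n) = part_join (join_upto M a n) (a (Suc n))"

definition seq_entropy :: "'a measure \<Rightarrow> (nat \<Rightarrow> 'a set set) \<Rightarrow> ereal" where
  "seq_entropy M a = limsup (\<lambda>n. ereal (part_entropy M (join_upto M a n) / real n))"

definition Pstar :: "'a measure \<Rightarrow> 'a set set set \<Rightarrow> nat \<Rightarrow> ereal" where
  "Pstar M K n = (SUP a \<in> {a. \<forall>i\<in>{1..n}. a i \<in> K}. ereal (part_entropy M (join_upto M a n)))"

definition hstar :: "'a measure \<Rightarrow> 'a set set set \<Rightarrow> ereal" where
  "hstar M K = limsup (\<lambda>n. Pstar M K n / ereal (real n))"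

text \<open>S_K: sequences (a_i)_{i>=1} of elements of K (index 0 is unused).\<close>
definition seqs_in :: "'a set set set \<Rightarrow> (nat \<Rightarrow> 'a set set) set" where
  "seqs_in K = {a. \<forall>i\<ge>1. a i \<in> K}"

end

theory Submission
  imports Defs
begin

text \<open>The inequality \<open>h(\<A>) \<le> h*(K)\<close> for \<open>\<A> \<in> S_K\<close> is immediate from
  \<open>H(\<alpha>_1 \<or> ... \<or> \<alpha>_n) \<le> P*(n)\<close>. For the converse a single sequence is glued together
  from finite blocks. Fix reals \<open>y_k\<close> converging to \<open>h*(K)\<close> from below. When \<open>T\<close> places
  are filled, pick \<open>n\<close> with \<open>P*(n)/n\<close> above a number slightly larger than \<open>y_k\<close> and with
  \<open>T\<close> negligible against \<open>n\<close>; this yields \<open>\<beta>_1, ..., \<beta>_n \<in> K\<close> with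
  \<open>H(\<beta>_1 \<or> ... \<or> \<beta>_n) > y_k (T + n)\<close>, and they are appended. The join of the first
  \<open>T + n\<close> terms refines the join of the block, and entropy grows under refinement, so the
  average entropy at the end of block \<open>k\<close> exceeds \<open>y_k\<close>; hence the limsup is at least
  \<open>h*(K)\<close>.\<close>

lemma fin_partition_space: "fin_partition M {space M}"
  unfolding fin_partition_def by (auto simp: disjoint_def)

lemma fin_partition_part_join:
  assumes "fin_partition M \<alpha>" "fin_partition M \<beta>"
  shows "fin_partition M (part_join \<alpha> \<beta>)"
  unfolding fin_partition_def
proof (intro conjI)
  have "part_join \<alpha> \<beta> = (\<lambda>(A, B). A \<inter> B) ` (\<alpha> \<times> \<beta>)"
    unfolding part_join_def by auto
  with assms show "finite (part_join \<alpha> \<beta>)"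
    by (simp add: fin_partition_def)
  show "part_join \<alpha> \<beta> \<subseteq> sets M"
    using assms unfolding part_join_def fin_partition_def by auto
  show "disjoint (part_join \<alpha> \<beta>)"
    using assms unfolding part_join_def fin_partition_def disjoint_def by blast
  show "\<Union> (part_join \<alpha> \<beta>) = space M"
    using assms unfolding part_join_def fin_partition_def by blast
qed

lemma fin_partition_join_upto:
  "(\<And>i. i \<in> {1..n} \<Longrightarrow> fin_partition M (a i)) \<Longrightarrow> fin_partition M (join_upto M a n)"
  by (induction n) (auto intro!: fin_partition_part_join fin_partition_space)

lemma join_upto_cong:
  "(\<And>i. i \<in> {1..n} \<Longrightarrow> a i = b i) \<Longrightarrow> join_upto M a n = join_upto M b n"
  by (induction n) auto

lemma join_upto_subset_space: "C \<in> join_upto M a n \<Longrightarrow> C \<subseteq> space M"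
  by (induction n arbitrary: C) (auto simp: part_join_def)

lemma join_upto_shift_refines:
  "C \<in> join_upto M a (m + n) \<Longrightarrow> \<exists>B\<in>join_upto M (\<lambda>i. a (m + i)) n. C \<subseteq> B"
proof (induction n arbitrary: C)
  case 0
  then show ?case using join_upto_subset_space[of C M a m] by auto
next
  case (Suc n)
  then obtain D A where D: "D \<in> join_upto M a (m + n)" "A \<in> a (Suc (m + n))" "C = D \<inter> A"
    by (auto simp: part_join_def)
  with Suc.IH obtain B where "B \<in> join_upto M (\<lambda>i. a (m + i)) n" "D \<subseteq> B"
    by blast
  with D have "B \<inter> A \<in> join_upto M (\<lambda>i. a (m + i)) (Suc n)" "C \<subseteq> B \<inter> A"
    by (auto simp: part_join_def)
  then show ?case by blast
qed

lemma (in finite_measure) part_entropy_le_refinement: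
  assumes \<gamma>: "fin_partition M \<gamma>" and \<beta>: "fin_partition M \<beta>"
    and refines: "\<And>C. C \<in> \<gamma> \<Longrightarrow> \<exists>B\<in>\<beta>. C \<subseteq> B"
  shows "part_entropy M \<beta> \<le> part_entropy M \<gamma>"
proof -
  let ?\<mu> = "measure M"
  have \<gamma>_parts: "finite \<gamma>" "\<gamma> \<subseteq> sets M" "disjoint \<gamma>" "\<Union>\<gamma> = space M"
    and \<beta>_parts: "finite \<beta>" "\<beta> \<subseteq> sets M" "disjoint \<beta>" "\<Union>\<beta> = space M"
    using \<gamma> \<beta> by (auto simp: fin_partition_def)
  have split: "?\<mu> B = (\<Sum>C\<in>\<gamma>. ?\<mu> (B \<inter> C))" if "B \<in> \<beta>" for B
    using that \<beta>_parts \<gamma>_parts disjointD[OF \<gamma>_parts(3)]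
    by (intro measure_real_sum_image_fn[of B \<gamma> id, simplified]) auto
  have cell: "?\<mu> C * ln (?\<mu> C) \<le> (\<Sum>B\<in>\<beta>. ?\<mu> (B \<inter> C) * ln (?\<mu> B))" if "C \<in> \<gamma>" for C
  proof -
    obtain B\<^sub>0 where B\<^sub>0: "B\<^sub>0 \<in> \<beta>" "C \<subseteq> B\<^sub>0"
      using refines \<open>C \<in> \<gamma>\<close> by blast
    have "B \<inter> C = {}" if "B \<in> \<beta> - {B\<^sub>0}" for B
      using that B\<^sub>0 disjointD[OF \<beta>_parts(3)] by blast
    then have "(\<Sum>B\<in>\<beta>. ?\<mu> (B \<inter> C) * ln (?\<mu> B)) = ?\<mu> C * ln (?\<mu> B\<^sub>0)"
      using B\<^sub>0 \<beta>_parts(1) by (simp add: sum.remove Int_absorb1)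
    moreover have "?\<mu> C * ln (?\<mu> C) \<le> ?\<mu> C * ln (?\<mu> B\<^sub>0)"
    proof (cases "?\<mu> C = 0")
      case False
      then have "0 < ?\<mu> C" using measure_nonneg[of M C] by linarith
      moreover have "?\<mu> C \<le> ?\<mu> B\<^sub>0"
        using B\<^sub>0 \<beta>_parts \<gamma>_parts \<open>C \<in> \<gamma>\<close> by (intro finite_measure_mono) auto
      ultimately show ?thesis by (simp add: mult_left_mono)
    qed simp
    ultimately show ?thesis by simp
  qed
  have "(\<Sum>B\<in>\<beta>. ?\<mu> B * ln (?\<mu> B)) = (\<Sum>C\<in>\<gamma>. \<Sum>B\<in>\<beta>. ?\<mu> (B \<inter> C) * ln (?\<mu> B))"
    using split by (simp add: sum_distrib_right sum.swap[of _ \<gamma>])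
  also have "\<dots> \<ge> (\<Sum>C\<in>\<gamma>. ?\<mu> C * ln (?\<mu> C))"
    using cell by (intro sum_mono) auto
  finally show ?thesis unfolding part_entropy_def by simp
qed

lemma (in finite_measure) part_entropy_join_upto_shift_le:
  assumes "\<And>i. i \<in> {1..m + n} \<Longrightarrow> fin_partition M (a i)"
  shows "part_entropy M (join_upto M (\<lambda>i. a (m + i)) n) \<le> part_entropy M (join_upto M a (m + n))"
  using assms
  by (intro part_entropy_le_refinement fin_partition_join_upto join_upto_shift_refines) auto

definition concat_blocks :: "(nat \<Rightarrow> nat) \<Rightarrow> (nat \<Rightarrow> nat \<Rightarrow> 'b) \<Rightarrow> nat \<Rightarrow> 'b" where
  "concat_blocks T b i = (let k = LEAST k. i \<le> T (Suc k) in b k (i - T k))"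

lemma concat_blocks_eq:
  assumes T: "strict_mono T" and i: "T k < i" "i \<le> T (Suc k)"
  shows "concat_blocks T b i = b k (i - T k)"
proof -
  have "(LEAST k. i \<le> T (Suc k)) = k"
  proof (rule Least_equality)
    fix k' assume "i \<le> T (Suc k')"
    with i have "T k < T (Suc k')" by linarith
    then show "k \<le> k'" using T by (simp add: strict_mono_less)
  qed (fact i(2))
  then show ?thesis by (simp add: concat_blocks_def)
qed

lemma strict_mono_block_containing:
  fixes T :: "nat \<Rightarrow> nat"
  assumes "strict_mono T" "T 0 = 0" "0 < i"
  obtains k where "T k < i" "i \<le> T (Suc k)"
proof -
  let ?k = "LEAST k. i \<le> T (Suc k)"
  have "i \<le> T (Suc i)"
    using seq_suble[OF assms(1), of "Suc i"] by simp
  then have "i \<le> T (Suc ?k)" by (rule LeastI)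
  moreover have "T ?k < i"
  proof (cases ?k)
    case (Suc k)
    then show ?thesis using not_less_Least[of k "\<lambda>k. i \<le> T (Suc k)"] by simp
  qed (use assms in simp)
  ultimately show ?thesis using that by blast
qed

lemma concat_blocks_in_seqs_in:
  assumes T: "strict_mono T" "T 0 = 0"
    and blocks: "\<And>k j. j \<in> {1..T (Suc k) - T k} \<Longrightarrow> b k j \<in> K"
  shows "concat_blocks T b \<in> seqs_in K"
  unfolding seqs_in_def
proof (intro CollectI allI impI)
  fix i :: nat assume "1 \<le> i"
  then have "0 < i" by simp
  then obtain k where k: "T k < i" "i \<le> T (Suc k)"
    by (rule strict_mono_block_containing[OF T])
  then have "i - T k \<in> {1..T (Suc k) - T k}"
    by auto
  then show "concat_blocks T b i \<in> K"
    using concat_blocks_eq[OF T(1) k, of b] blocks by simp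
qed

lemma (in finite_measure) part_entropy_block_le_concat_blocks:
  assumes T: "strict_mono T"
    and parts: "\<And>i. 1 \<le> i \<Longrightarrow> fin_partition M (concat_blocks T b i)"
  shows "part_entropy M (join_upto M (b k) (T (Suc k) - T k))
      \<le> part_entropy M (join_upto M (concat_blocks T b) (T (Suc k)))"
proof -
  define n where "n = T (Suc k) - T k"
  have T_Suc: "T (Suc k) = T k + n"
    using strict_monoD[OF T, of k "Suc k"] by (simp add: n_def)
  have "concat_blocks T b (T k + i) = b k i" if "i \<in> {1..n}" for i
    using concat_blocks_eq[OF T, of k "T k + i"] that by (simp add: T_Suc)
  then have "join_upto M (b k) n = join_upto M (\<lambda>i. concat_blocks T b (T k + i)) n"
    by (intro join_upto_cong) simp
  moreover have "part_entropy M (join_upto M (\<lambda>i. concat_blocks T b (T k + i)) n)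
      \<le> part_entropy M (join_upto M (concat_blocks T b) (T k + n))"
    using parts by (intro part_entropy_join_upto_shift_le) auto
  ultimately show ?thesis
    by (simp add: T_Suc flip: n_def)
qed

lemma less_LimsupD:
  fixes f :: "_ \<Rightarrow> 'a :: complete_linorder"
  assumes "y < Limsup F f"
  shows "\<exists>\<^sub>F x in F. y < f x"
proof (rule ccontr)
  assume "\<not> (\<exists>\<^sub>F x in F. y < f x)"
  then have "\<forall>\<^sub>F x in F. f x \<le> y"
    by (simp add: not_frequently not_less)
  then have "Limsup F f \<le> y"
    by (rule Limsup_bounded)
  with assms show False by simp
qed

lemma seq_entropy_le_hstar:
  assumes "a \<in> seqs_in K"
  shows "seq_entropy M a \<le> hstar M K"
  unfolding seq_entropy_def hstar_def
proof (rule Limsup_mono)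
  show "\<forall>\<^sub>F n in sequentially.
      ereal (part_entropy M (join_upto M a n) / real n) \<le> Pstar M K n / ereal (real n)"
    using eventually_ge_at_top[of 1]
  proof eventually_elim
    case (elim n)
    have "ereal (part_entropy M (join_upto M a n)) \<le> Pstar M K n"
      unfolding Pstar_def using assms by (intro SUP_upper) (auto simp: seqs_in_def)
    then have "ereal (part_entropy M (join_upto M a n)) / ereal (real n)
        \<le> Pstar M K n / ereal (real n)"
      using elim by (intro ereal_divide_right_mono) auto
    with elim show ?case by simp
  qed
qed

lemma less_hstar_ex_block:
  assumes "ereal y < hstar M K"
  shows "\<exists>n b. 1 \<le> n \<and> (\<forall>i\<in>{1..n}. b i \<in> K)
           \<and> y * real (T + n) < part_entropy M (join_upto M b n)"
proof -
  obtain y' where y': "y < y'" "ereal y' < hstar M K"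
    using ereal_dense2[OF assms] by auto
  obtain N :: nat where N: "y * T / (y' - y) < N"
    using reals_Archimedean2 by blast
  have "\<exists>\<^sub>F n in sequentially. ereal y' < Pstar M K n / ereal (real n)"
    using y'(2) unfolding hstar_def by (rule less_LimsupD)
  then have "\<exists>\<^sub>F n in sequentially. ereal y' < Pstar M K n / ereal (real n) \<and> max N 1 \<le> n"
    using eventually_ge_at_top by (rule frequently_eventually_frequently)
  then obtain n where n: "N \<le> n" "1 \<le> n" "ereal y' < Pstar M K n / ereal (real n)"
    by (auto dest: frequently_ex)
  then have "ereal (y' * n) < Pstar M K n"
    by (simp add: ereal_less_divide_pos mult.commute)
  then obtain b where b: "\<forall>i\<in>{1..n}. b i \<in> K" "y' * n < part_entropy M (join_upto M b n)"
    unfolding Pstar_def less_SUP_iff by auto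
  have "y * T / (y' - y) < n"
    using N n(1) by (meson of_nat_le_iff less_le_trans)
  then have "y * T < (y' - y) * n"
    using y'(1) by (simp add: pos_divide_less_eq mult.commute)
  then have "y * real (T + n) < y' * n"
    by (simp add: algebra_simps)
  with b n(2) show ?thesis by (auto intro!: exI[of _ n])
qed

lemma (in finite_measure) ex_seq_entropy_ge:
  fixes c :: ereal
  assumes K: "K \<subseteq> {\<alpha>. fin_partition M \<alpha>}" and "-\<infinity> < c"
    and blocks: "\<And>y T. ereal y < c \<Longrightarrow> \<exists>n b. 1 \<le> n \<and> (\<forall>i\<in>{1..n}. b i \<in> K)
                   \<and> y * real (T + n) < part_entropy M (join_upto M b n)"
  shows "\<exists>a\<in>seqs_in K. c \<le> seq_entropy M a"
proof -
  obtain y :: "nat \<Rightarrow> real" where y: "\<And>k. y k < c" "(\<lambda>k. ereal (y k)) \<longlonglongrightarrow> c"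
    using ereal_incseq_approx[OF \<open>-\<infinity> < c\<close>] by metis
  obtain len blk where blk: "\<And>k T. 1 \<le> len k T \<and> (\<forall>i\<in>{1..len k T}. blk k T i \<in> K)
      \<and> y k * real (T + len k T) < part_entropy M (join_upto M (blk k T) (len k T))"
    using blocks[OF y(1)] by metis
  define T where "T = rec_nat 0 (\<lambda>k t. t + len k t)"
  have T_Suc: "T (Suc k) = T k + len k (T k)" for k
    by (simp add: T_def)
  have "0 < len k t" for k t
    using blk[of k t] by simp
  then have T: "strict_mono T" "T 0 = 0"
    by (simp_all add: strict_mono_Suc_iff T_Suc T_def)
  define a where "a = concat_blocks T (\<lambda>k. blk k (T k))"
  have a: "a \<in> seqs_in K"
    unfolding a_def using blk by (intro concat_blocks_in_seqs_in[OF T]) (auto simp: T_Suc)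
  have ratio: "y k < part_entropy M (join_upto M a (T (Suc k))) / T (Suc k)" for k
  proof -
    have "y k * T (Suc k) < part_entropy M (join_upto M (blk k (T k)) (len k (T k)))"
      using blk by (simp add: T_Suc)
    also have "\<dots> \<le> part_entropy M (join_upto M a (T (Suc k)))"
      using part_entropy_block_le_concat_blocks[OF T(1), of "\<lambda>k. blk k (T k)" k] a K
      by (auto simp: a_def T_Suc seqs_in_def)
    finally have "y k * T (Suc k) < part_entropy M (join_upto M a (T (Suc k)))" .
    moreover have "0 < T (Suc k)"
      using strict_monoD[OF T(1), of 0 "Suc k"] T(2) by simp
    ultimately show ?thesis
      by (simp add: pos_less_divide_eq)
  qed
  have "c = limsup (\<lambda>k. ereal (y k))"
    using lim_imp_Limsup[OF _ y(2)] by simp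
  also have "\<dots> \<le> limsup (\<lambda>k. ereal (part_entropy M (join_upto M a (T (Suc k))) / T (Suc k)))"
    using ratio by (intro Limsup_mono always_eventually allI) (simp add: less_imp_le)
  also have "\<dots> \<le> seq_entropy M a"
    using limsup_subseq_mono[of "\<lambda>k. T (Suc k)"] T(1)
    unfolding seq_entropy_def by (simp add: strict_mono_Suc_iff comp_def)
  finally show ?thesis using a by blast
qed

theorem lemma2p3:
  fixes M :: "'a::polish_space measure" and K :: "'a set set set"
  assumes "prob_space M"
    and "sets M = sets borel"
    and "K \<subseteq> {\<alpha>. fin_partition M \<alpha>}"
    and "K \<noteq> {}"
  shows "hstar M K = (SUP a \<in> seqs_in K. seq_entropy M a)
         \<and> (\<exists>a\<in>seqs_in K. hstar M K = seq_entropy M a)"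
proof -
  interpret prob_space M by fact
  obtain a where a: "a \<in> seqs_in K" "hstar M K \<le> seq_entropy M a"
  proof (cases "hstar M K = -\<infinity>")
    case True
    obtain \<alpha> where "\<alpha> \<in> K" using \<open>K \<noteq> {}\<close> by blast
    then have "(\<lambda>_. \<alpha>) \<in> seqs_in K" by (simp add: seqs_in_def)
    with True that show thesis by simp
  next
    case False
    then have "-\<infinity> < hstar M K" by simp
    with that show thesis
      using ex_seq_entropy_ge[OF assms(3) _ less_hstar_ex_block] by blast
  qed
  then have "hstar M K = seq_entropy M a"
    using seq_entropy_le_hstar by (blast intro: antisym)
  moreover have "(SUP a \<in> seqs_in K. seq_entropy M a) = hstar M K"
    using a seq_entropy_le_hstar by (intro antisym SUP_least SUP_upper2) auto
  ultimately show ?thesis using a by auto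
qed

end
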